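(* Let $b,w\ge0$ be integers and let $d_1,\dots,d_{b+1},e_1,\dots,e_{w+1}\in\mathbb N$ satisfy $d_1+\dots+d_{b+1}=b+w+1=e_1+\dots+e_{w+1}$. Let $S$ be the set of spanning trees $t$ of the complete bipartite graph $K_{b+1,w+1}$ with parts $\{a_1,\dots,a_{b+1}\}$ and $\{c_1,\dots,c_{w+1}\}$ such that $t$ contains the edge $\{a_1,c_1\}$, $\deg_t(a_i)=d_i$ for all $i\le b+1$ and $\deg_t(c_j)=e_j$ for all $j\le w+1$. Then $$\#S=\binom{b}{e_1-1,\dots,e_{w+1}-1}\binom{w}{d_1-1,\dots,d_{b+1}-1}\times\begin{cases}1-\dfrac{(b-e_1+1)(w-d_1+1)}{bw},&\text{if }w,b>0,\\[2mm]1,&\text{if }w=0\text{ or }b=0.\end{cases}$$ By symmetry, the same holds when the edge $\{a_1,c_1\}$ is replaced by any prescribed edge $\{a_k,c_m\}$, with $d_1,e_1$ replaced by $d_k,e_m$.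
   Context: $\binom{n}{k_1,\dots,k_r}$ denotes the multinomial coefficient $\frac{n!}{k_1!\cdots k_r!}$ (for $k_1+\dots+k_r=n$). Spanning trees are subgraphs of $K_{b+1,w+1}$ on all $b+w+2$ vertices that are trees; $\deg_t$ is the degree in $t$. *)

theory Defs
  imports Complex_Main
begin

definition multinom :: "nat \<Rightarrow> int list \<Rightarrow> real" where
  "multinom n ks = (if (\<forall>k\<in>set ks. 0 \<le> k) \<and> sum_list ks = int n
     then fact n / (\<Prod>k\<leftarrow>ks. fact (nat k)) else 0)"

text \<open>Vertices of K_{b+1,w+1}: Inl i stands for a_{i+1} (i \<le> b),
  Inr j stands for c_{j+1} (j \<le> w). A subgraph is given by its edge set
  T, where (i,j) \<in> T means the edge {a_{i+1}, c_{j+1}}.\<close>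
definition bip_vertices :: "nat \<Rightarrow> nat \<Rightarrow> (nat + nat) set" where
  "bip_vertices b w = Inl ` {..b} \<union> Inr ` {..w}"

definition bip_adj :: "(nat \<times> nat) set \<Rightarrow> nat + nat \<Rightarrow> nat + nat \<Rightarrow> bool" where
  "bip_adj T u v \<longleftrightarrow> (\<exists>i j. (i, j) \<in> T \<and> {u, v} = {Inl i, Inr j})"

definition bip_connected :: "nat \<Rightarrow> nat \<Rightarrow> (nat \<times> nat) set \<Rightarrow> bool" where
  "bip_connected b w T \<longleftrightarrow>
     (\<forall>u\<in>bip_vertices b w. \<forall>v\<in>bip_vertices b w. (u, v) \<in> {(x, y). bip_adj T x y}\<^sup>*)"

definition bip_has_cycle :: "(nat \<times> nat) set \<Rightarrow> bool" where
  "bip_has_cycle T \<longleftrightarrow> (\<exists>vs. 3 \<le> length vs \<and> distinct vs \<and>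
     (\<forall>k<length vs. bip_adj T (vs ! k) (vs ! ((k + 1) mod length vs))))"

definition bip_spanning_tree :: "nat \<Rightarrow> nat \<Rightarrow> (nat \<times> nat) set \<Rightarrow> bool" where
  "bip_spanning_tree b w T \<longleftrightarrow> T \<subseteq> {..b} \<times> {..w} \<and> bip_connected b w T \<and> \<not> bip_has_cycle T"

definition deg_a :: "(nat \<times> nat) set \<Rightarrow> nat \<Rightarrow> nat" where
  "deg_a T i = card {j. (i, j) \<in> T}"

definition deg_c :: "(nat \<times> nat) set \<Rightarrow> nat \<Rightarrow> nat" where
  "deg_c T j = card {i. (i, j) \<in> T}"

end

theory Submission
  imports Defs
begin

text \<open>
  We count spanning trees of the complete bipartite graph on arbitrary finite parts A and C.
  Unless both parts are singletons, some part of size at least 2 has a vertex of degree 1: a part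
  without such leaves has degree sum at least twice its size and is therefore the strictly
  smaller part. Removing a leaf i of A attached to j is a bijection onto the pairs of j and
  a tree on A - {i} and C in which the degree of j is lowered by one. This is the Pascal
  recursion of the multinomial coefficients, which gives the classical count of all trees
  with prescribed degrees. Trees through a fixed edge (k, m) are counted by the same
  recursion: if the removed leaf is k itself, they are the trees in which k hangs at m, counted
  by the classical formula; otherwise the recursion reduces to an algebraic identity for the
  correction factor. Exchanging the two parts reduces leaves in C to leaves in A.
\<close>

section \<open>Connectivity and cycles\<close>

definition connected_on :: "'v set \<Rightarrow> ('v \<Rightarrow> 'v \<Rightarrow> bool) \<Rightarrow> bool" where
  "connected_on V E \<longleftrightarrow> (\<forall>u\<in>V. \<forall>v\<in>V. (u, v) \<in> {(x, y). E x y}\<^sup>*)"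

definition has_cycle :: "('v \<Rightarrow> 'v \<Rightarrow> bool) \<Rightarrow> bool" where
  "has_cycle E \<longleftrightarrow> (\<exists>vs. 3 \<le> length vs \<and> distinct vs \<and>
     (\<forall>k<length vs. E (vs ! k) (vs ! ((k + 1) mod length vs))))"

lemma rtrancl_map_into_rtrancl:
  assumes "(a, b) \<in> r\<^sup>*" and "\<And>x y. (x, y) \<in> r \<Longrightarrow> (f x, f y) \<in> s\<^sup>*"
  shows "(f a, f b) \<in> s\<^sup>*"
  using assms(1)
proof induction
  case (step y z)
  then show ?case using assms(2) by (blast intro: rtrancl_trans)
qed simp

lemma connected_on_map:
  assumes "\<And>x y. E x y \<Longrightarrow> E' (f x) (f y)" and "connected_on V E"
  shows "connected_on (f ` V) E'"
  using assms(2) unfolding connected_on_def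
  by (blast intro: rtrancl_map_into_rtrancl[where r = "{(x, y). E x y}"] assms(1))

lemma has_cycle_map:
  assumes "inj f" and "\<And>x y. E x y \<Longrightarrow> E' (f x) (f y)" and "has_cycle E"
  shows "has_cycle E'"
proof -
  obtain vs where "3 \<le> length vs" "distinct vs"
    and adj: "\<forall>k<length vs. E (vs ! k) (vs ! ((k + 1) mod length vs))"
    using assms(3) unfolding has_cycle_def by blast
  moreover have "(k + 1) mod length vs < length vs" if "k < length vs" for k
    by (rule mod_less_divisor) (use that in linarith)
  moreover have "inj_on f (set vs)" using assms(1) by (rule inj_on_subset) simp
  ultimately show ?thesis
    unfolding has_cycle_def using assms(2) by (intro exI[of _ "map f vs"]) (simp add: distinct_map)
qed

lemma connected_on_add_pendant:
  assumes u: "u \<notin> V" and v: "v \<in> V" and u_isolated: "\<And>z. \<not> E z u" "\<And>z. \<not> E u z"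
  shows "connected_on (insert u V) (\<lambda>x y. E x y \<or> {x, y} = {u, v}) \<longleftrightarrow> connected_on V E"
proof
  let ?R = "{(x, y). E x y}" and ?R' = "{(x, y). E x y \<or> {x, y} = {u, v}}"
  assume conn: "connected_on (insert u V) (\<lambda>x y. E x y \<or> {x, y} = {u, v})"
  define r where "r x = (if x = u then v else x)" for x
  \<comment> \<open>Retracting the pendant vertex onto its neighbour turns walks of the new graph
    into walks of the old one.\<close>
  have r_step: "(r x, r y) \<in> ?R\<^sup>*" if "(x, y) \<in> ?R'" for x y
  proof (cases "E x y")
    case True
    then have "x \<noteq> u" "y \<noteq> u" using u_isolated by auto
    then show ?thesis using True by (simp add: r_def r_into_rtrancl)
  next
    case False
    then have "{x, y} = {u, v}" using that by simp
    then show ?thesis by (auto simp: r_def doubleton_eq_iff)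
  qed
  have "(r a, r b) \<in> ?R\<^sup>*" if "a \<in> V" "b \<in> V" for a b
  proof (rule rtrancl_map_into_rtrancl[OF _ r_step])
    show "(a, b) \<in> ?R'\<^sup>*" using conn that unfolding connected_on_def by simp
  qed
  moreover have "r a = a" if "a \<in> V" for a using u that by (auto simp: r_def)
  ultimately show "connected_on V E" unfolding connected_on_def by auto
next
  let ?R' = "{(x, y). E x y \<or> {x, y} = {u, v}}"
  assume conn: "connected_on V E"
  have "(x, v) \<in> ?R'\<^sup>* \<and> (v, x) \<in> ?R'\<^sup>*" if "x \<in> insert u V" for x
  proof (cases "x = u")
    case True
    then show ?thesis by (auto intro: r_into_rtrancl)
  next
    case False
    then have "(x, v) \<in> {(x, y). E x y}\<^sup>* \<and> (v, x) \<in> {(x, y). E x y}\<^sup>*"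
      using conn that v unfolding connected_on_def by auto
    moreover have "{(x, y). E x y}\<^sup>* \<subseteq> ?R'\<^sup>*" by (rule rtrancl_mono) auto
    ultimately show ?thesis by auto
  qed
  then show "connected_on (insert u V) (\<lambda>x y. E x y \<or> {x, y} = {u, v})"
    unfolding connected_on_def by (meson rtrancl_trans)
qed

lemma cycle_vertex_two_neighbours:
  assumes "3 \<le> length vs" "distinct vs" "\<forall>k<length vs. E (vs ! k) (vs ! ((k + 1) mod length vs))"
    and "u \<in> set vs"
  shows "\<exists>x y. x \<noteq> y \<and> E u x \<and> E y u"
proof -
  let ?n = "length vs"
  obtain p where p: "p < ?n" "vs ! p = u" using assms(4) by (auto simp: in_set_conv_nth)
  define q where "q = (if p = 0 then ?n - 1 else p - 1)"
  have q: "q < ?n" "(q + 1) mod ?n = p" using p assms(1) by (auto simp: q_def)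
  have "(p + 1) mod ?n \<noteq> q" using p assms(1) by (auto simp: q_def mod_Suc)
  moreover have "(p + 1) mod ?n < ?n" by (rule mod_less_divisor) (use p in linarith)
  ultimately have "vs ! ((p + 1) mod ?n) \<noteq> vs ! q"
    using assms(2) q by (simp add: nth_eq_iff_index_eq)
  moreover have "E u (vs ! ((p + 1) mod ?n))" "E (vs ! q) u"
    using assms(3)[rule_format, OF p(1)] assms(3)[rule_format, OF q(1)]
    by (simp_all only: p(2) q(2))
  ultimately show ?thesis by blast
qed

lemma has_cycle_add_pendant:
  assumes uv: "u \<noteq> v" and u_isolated: "\<And>z. \<not> E z u" "\<And>z. \<not> E u z"
  shows "has_cycle (\<lambda>x y. E x y \<or> {x, y} = {u, v}) \<longleftrightarrow> has_cycle E"
proof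
  assume "has_cycle (\<lambda>x y. E x y \<or> {x, y} = {u, v})"
  then obtain vs where len: "3 \<le> length vs" and dist: "distinct vs"
    and adj: "\<forall>k<length vs. E (vs ! k) (vs ! ((k + 1) mod length vs)) \<or>
                {vs ! k, vs ! ((k + 1) mod length vs)} = {u, v}"
    unfolding has_cycle_def by blast
  \<comment> \<open>A pendant vertex has only one neighbour, so it cannot lie on the cycle.\<close>
  have "u \<notin> set vs"
  proof
    assume "u \<in> set vs"
    then obtain x y where "x \<noteq> y" "E u x \<or> {u, x} = {u, v}" "E y u \<or> {y, u} = {u, v}"
      using cycle_vertex_two_neighbours[OF len dist adj] by blast
    then show False using uv u_isolated by (auto simp: doubleton_eq_iff)
  qed
  have "E (vs ! k) (vs ! ((k + 1) mod length vs))" if k: "k < length vs" for k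
  proof -
    have "vs ! k \<in> set vs" "vs ! ((k + 1) mod length vs) \<in> set vs"
      using k by (auto intro!: nth_mem mod_less_divisor)
    then have "{vs ! k, vs ! ((k + 1) mod length vs)} \<noteq> {u, v}"
      using \<open>u \<notin> set vs\<close> by (auto simp: doubleton_eq_iff)
    then show ?thesis using adj k by blast
  qed
  then show "has_cycle E" unfolding has_cycle_def using len dist by blast
next
  assume "has_cycle E"
  then show "has_cycle (\<lambda>x y. E x y \<or> {x, y} = {u, v})" unfolding has_cycle_def by blast
qed

section \<open>Spanning trees of complete bipartite graphs\<close>

definition bip_tree :: "nat set \<Rightarrow> nat set \<Rightarrow> (nat \<times> nat) set \<Rightarrow> bool" where
  "bip_tree A C T \<longleftrightarrow> T \<subseteq> A \<times> C \<and> connected_on (Inl ` A \<union> Inr ` C) (bip_adj T) \<and>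
     \<not> has_cycle (bip_adj T)"

lemma bip_spanning_tree_iff_bip_tree: "bip_spanning_tree b w T \<longleftrightarrow> bip_tree {..b} {..w} T"
  unfolding bip_spanning_tree_def bip_tree_def connected_on_def has_cycle_def
    bip_connected_def bip_has_cycle_def bip_vertices_def by simp

lemma bip_adj_insert:
  "bip_adj (insert (i, j) T) = (\<lambda>x y. bip_adj T x y \<or> {x, y} = {Inl i, Inr j})"
  unfolding bip_adj_def by (auto simp: fun_eq_iff)

lemma bip_tree_insert_leaf:
  assumes "i \<notin> A" "j \<in> C" "T \<subseteq> A \<times> C"
  shows "bip_tree (insert i A) C (insert (i, j) T) \<longleftrightarrow> bip_tree A C T"
proof -
  have isolated: "\<not> bip_adj T z (Inl i)" "\<not> bip_adj T (Inl i) z" for z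
    using assms(1,3) unfolding bip_adj_def by (auto simp: doubleton_eq_iff)
  have V: "Inl ` insert i A \<union> Inr ` C = insert (Inl i) (Inl ` A \<union> Inr ` C)" by auto
  have conn: "connected_on (insert (Inl i) (Inl ` A \<union> Inr ` C)) (bip_adj (insert (i, j) T))
      \<longleftrightarrow> connected_on (Inl ` A \<union> Inr ` C) (bip_adj T)"
    unfolding bip_adj_insert by (rule connected_on_add_pendant) (use assms(1,2) isolated in auto)
  have cyc: "has_cycle (bip_adj (insert (i, j) T)) \<longleftrightarrow> has_cycle (bip_adj T)"
    unfolding bip_adj_insert by (rule has_cycle_add_pendant) (use isolated in auto)
  show ?thesis unfolding bip_tree_def V conn cyc using assms by auto
qed

lemma bip_adj_swap:
  "bip_adj T x y \<Longrightarrow> bip_adj (prod.swap ` T) (case_sum Inr Inl x) (case_sum Inr Inl y)"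
  unfolding bip_adj_def by (auto simp: doubleton_eq_iff)

lemma bip_tree_swap:
  assumes "bip_tree A C T"
  shows "bip_tree C A (prod.swap ` T)"
proof -
  let ?f = "case_sum Inr Inl :: nat + nat \<Rightarrow> nat + nat"
  have "inj ?f" by (rule injI) (auto split: sum.splits)
  have "bip_adj (prod.swap ` T) x y \<Longrightarrow> bip_adj T (?f x) (?f y)" for x y
    using bip_adj_swap[of "prod.swap ` T"] by (simp add: image_image)
  then have "\<not> has_cycle (bip_adj (prod.swap ` T))"
    using has_cycle_map[OF \<open>inj ?f\<close>] assms unfolding bip_tree_def by blast
  moreover have "connected_on (?f ` (Inl ` A \<union> Inr ` C)) (bip_adj (prod.swap ` T))"
    using assms unfolding bip_tree_def by (intro connected_on_map[of "bip_adj T"] bip_adj_swap) auto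
  then have "connected_on (Inl ` C \<union> Inr ` A) (bip_adj (prod.swap ` T))"
    by (simp add: image_Un image_image Un_commute)
  ultimately show ?thesis using assms unfolding bip_tree_def by auto
qed

lemma bip_tree_has_edge_at:
  assumes "bip_tree A C T" "i \<in> A" "C \<noteq> {}"
  shows "\<exists>j. (i, j) \<in> T"
proof -
  obtain j where "j \<in> C" using assms(3) by auto
  then have "(Inl i, Inr j) \<in> {(x, y). bip_adj T x y}\<^sup>*"
    using assms(1,2) unfolding bip_tree_def connected_on_def by blast
  then obtain z where "bip_adj T (Inl i) z" by (cases rule: converse_rtranclE) auto
  then show ?thesis unfolding bip_adj_def by (auto simp: doubleton_eq_iff)
qed

lemma bip_tree_single_edge: "bip_tree {i} {j} {(i, j)}"
proof -
  have "\<not> has_cycle (bip_adj {})" by (auto simp: has_cycle_def bip_adj_def) presburger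
  then have "bip_tree {} {j} {}" unfolding bip_tree_def connected_on_def by auto
  then show ?thesis using bip_tree_insert_leaf[of i "{}" j "{j}" "{}"] by simp
qed

lemma finite_if_bip_tree: "finite A \<Longrightarrow> finite C \<Longrightarrow> bip_tree A C T \<Longrightarrow> finite T"
  unfolding bip_tree_def by (meson finite_SigmaI finite_subset)

lemma deg_a_swap: "deg_a (prod.swap ` T) j = deg_c T j"
  unfolding deg_a_def deg_c_def by (metis (no_types) pair_in_swap_image)

lemma deg_c_swap: "deg_c (prod.swap ` T) i = deg_a T i"
  unfolding deg_a_def deg_c_def by (metis (no_types) pair_in_swap_image)

lemma deg_a_insert:
  assumes "finite T" "(i, j) \<notin> T"
  shows "deg_a (insert (i, j) T) i' = deg_a T i' + (if i' = i then 1 else 0)"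
proof -
  have fin: "finite {j'. (i', j') \<in> T}"
    using finite_imageI[OF assms(1), of snd] by (rule finite_subset[rotated]) force
  show ?thesis
  proof (cases "i' = i")
    case True
    then have "{j'. (i', j') \<in> insert (i, j) T} = insert j {j'. (i', j') \<in> T}" by auto
    then show ?thesis unfolding deg_a_def using fin True assms(2) by simp
  next
    case False
    then have "{j'. (i', j') \<in> insert (i, j) T} = {j'. (i', j') \<in> T}" by auto
    then show ?thesis unfolding deg_a_def using False by simp
  qed
qed

lemma deg_c_insert:
  assumes "finite T" "(i, j) \<notin> T"
  shows "deg_c (insert (i, j) T) j' = deg_c T j' + (if j' = j then 1 else 0)"
  using deg_a_insert[of "prod.swap ` T" j i j'] assms by (simp add: deg_a_swap[symmetric])

definition deg_trees :: "nat set \<Rightarrow> nat set \<Rightarrow> (nat \<Rightarrow> nat) \<Rightarrow> (nat \<Rightarrow> nat) \<Rightarrow> (nat \<times> nat) set set" where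
  "deg_trees A C d e =
     {T. bip_tree A C T \<and> (\<forall>i\<in>A. deg_a T i = d i) \<and> (\<forall>j\<in>C. deg_c T j = e j)}"

lemma deg_trees_subset: "T \<in> deg_trees A C d e \<Longrightarrow> T \<subseteq> A \<times> C"
  unfolding deg_trees_def bip_tree_def by blast

lemma finite_deg_trees: "finite A \<Longrightarrow> finite C \<Longrightarrow> finite (deg_trees A C d e)"
  by (rule finite_subset[of _ "Pow (A \<times> C)"]) (auto simp: deg_trees_def bip_tree_def)

lemma swap_image_in_deg_trees: "T \<in> deg_trees A C d e \<Longrightarrow> prod.swap ` T \<in> deg_trees C A e d"
  unfolding deg_trees_def by (simp add: bip_tree_swap deg_a_swap deg_c_swap)

lemma card_deg_trees_swap:
  "card {T \<in> deg_trees A C d e. P T} = card {T \<in> deg_trees C A e d. P (prod.swap ` T)}"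
proof -
  have "bij_betw (image prod.swap)
      {T \<in> deg_trees C A e d. P (prod.swap ` T)} {T \<in> deg_trees A C d e. P T}"
    by (rule bij_betw_byWitness[where f' = "image prod.swap"])
      (auto simp: image_image swap_image_in_deg_trees intro!: image_eqI[where x = "prod.swap ` _"])
  then show ?thesis by (rule bij_betw_same_card[symmetric])
qed

lemma deg_trees_degree_zero:
  assumes "finite A" "finite C" "C \<noteq> {}" "i \<in> A" "d i = 0"
  shows "deg_trees A C d e = {}"
proof (rule ccontr)
  assume "deg_trees A C d e \<noteq> {}"
  then obtain T where T: "bip_tree A C T" "deg_a T i = 0"
    using assms(4,5) unfolding deg_trees_def by auto
  obtain j where "(i, j) \<in> T" using bip_tree_has_edge_at[OF T(1) assms(4,3)] by blast
  moreover have "finite {j. (i, j) \<in> T}"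
    using finite_imageI[OF finite_if_bip_tree[OF assms(1,2) T(1)], of snd]
    by (rule finite_subset[rotated]) force
  ultimately show False using T(2) unfolding deg_a_def by auto
qed

lemma deg_trees_single_edge:
  assumes "d i = 1" "e j = 1"
  shows "deg_trees {i} {j} d e = {{(i, j)}}"
proof (intro equalityI subsetI)
  fix T assume T: "T \<in> deg_trees {i} {j} d e"
  then have "T \<subseteq> {(i, j)}" "deg_a T i = 1"
    using assms unfolding deg_trees_def bip_tree_def by auto
  moreover from this(2) have "T \<noteq> {}" by (auto simp: deg_a_def)
  ultimately show "T \<in> {{(i, j)}}" using subset_singletonD by blast
next
  fix T assume "T \<in> {{(i, j)}}"
  then show "T \<in> deg_trees {i} {j} d e"
    using assms bip_tree_single_edge unfolding deg_trees_def deg_a_def deg_c_def by simp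
qed

lemma insert_leaf_in_deg_trees_iff:
  assumes "finite A" "finite C" "i \<in> A" "j \<in> C" "T \<subseteq> (A - {i}) \<times> C" "d i = 1" "1 \<le> e j"
  shows "insert (i, j) T \<in> deg_trees A C d e \<longleftrightarrow> T \<in> deg_trees (A - {i}) C d (e(j := e j - 1))"
proof -
  have fin: "finite T" using assms(1,2,5) by (meson finite_Diff finite_SigmaI finite_subset)
  have new: "(i, j) \<notin> T" using assms(5) by auto
  have tree: "bip_tree A C (insert (i, j) T) \<longleftrightarrow> bip_tree (A - {i}) C T"
    using bip_tree_insert_leaf[of i "A - {i}" j C T] assms(3,4,5) by (simp add: insert_absorb)
  have "{j'. (i, j') \<in> T} = {}" using assms(5) by auto
  then have "deg_a T i = 0" by (simp add: deg_a_def)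
  then have deg_a: "(\<forall>i'\<in>A. deg_a (insert (i, j) T) i' = d i') \<longleftrightarrow> (\<forall>i'\<in>A - {i}. deg_a T i' = d i')"
    using assms(3,6) by (auto simp: deg_a_insert[OF fin new])
  have deg_c: "(\<forall>j'\<in>C. deg_c (insert (i, j) T) j' = e j') \<longleftrightarrow>
      (\<forall>j'\<in>C. deg_c T j' = (e(j := e j - 1)) j')"
    using assms(4,7) by (auto simp: deg_c_insert[OF fin new])
  show ?thesis unfolding deg_trees_def using tree deg_a deg_c by simp
qed

lemma deg_trees_leaf_bij:
  assumes "finite A" "finite C" "i \<in> A" "d i = 1" "\<forall>j\<in>C. 1 \<le> e j"
  shows "bij_betw (\<lambda>(j, T). insert (i, j) T)
           (SIGMA j:C. {T \<in> deg_trees (A - {i}) C d (e(j := e j - 1)). P (insert (i, j) T)})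
           {T \<in> deg_trees A C d e. P T}"
    (is "bij_betw ?f ?S _")
proof (rule bij_betwI')
  fix x y assume "x \<in> ?S" "y \<in> ?S"
  then obtain j T j' T' where xy: "x = (j, T)" "y = (j', T')"
    and "T \<in> deg_trees (A - {i}) C d (e(j := e j - 1))"
    and "T' \<in> deg_trees (A - {i}) C d (e(j' := e j' - 1))"
    by blast
  then have subs: "T \<subseteq> (A - {i}) \<times> C" "T' \<subseteq> (A - {i}) \<times> C" by (simp_all add: deg_trees_subset)
  have "j = j' \<and> T = T'" if eq: "insert (i, j) T = insert (i, j') T'"
  proof
    show "j = j'" using eq subs by blast
    moreover have "(i, j') \<notin> T" "(i, j') \<notin> T'" using subs by auto
    ultimately show "T = T'" using eq by (simp add: insert_ident)
  qed
  then show "(?f x = ?f y) = (x = y)" unfolding xy by auto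
next
  fix x assume "x \<in> ?S"
  then obtain j T where "x = (j, T)" "j \<in> C" "T \<in> deg_trees (A - {i}) C d (e(j := e j - 1))"
    "P (insert (i, j) T)"
    by blast
  moreover have "T \<subseteq> (A - {i}) \<times> C" using calculation(3) by (rule deg_trees_subset)
  ultimately show "?f x \<in> {T \<in> deg_trees A C d e. P T}"
    using insert_leaf_in_deg_trees_iff[of A C i j T d e] assms by simp
next
  fix T assume T: "T \<in> {T \<in> deg_trees A C d e. P T}"
  then have "card {j. (i, j) \<in> T} = 1" using assms(3,4) unfolding deg_trees_def deg_a_def by auto
  then obtain j where j: "{j'. (i, j') \<in> T} = {j}" by (rule card_1_singletonE)
  have "T \<subseteq> A \<times> C" using T deg_trees_subset by blast
  then have j_in: "j \<in> C" and sub: "T - {(i, j)} \<subseteq> (A - {i}) \<times> C" using j by auto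
  have T_eq: "T = insert (i, j) (T - {(i, j)})" using j by auto
  then have "T - {(i, j)} \<in> deg_trees (A - {i}) C d (e(j := e j - 1))"
    using T insert_leaf_in_deg_trees_iff[of A C i j "T - {(i, j)}" d e] sub assms j_in by simp
  then show "\<exists>x\<in>?S. T = ?f x"
    using T T_eq j_in by (intro bexI[of _ "(j, T - {(i, j)})"]) auto
qed

lemma card_deg_trees_leaf:
  assumes "finite A" "finite C" "i \<in> A" "d i = 1" "\<forall>j\<in>C. 1 \<le> e j"
  shows "card {T \<in> deg_trees A C d e. P T} =
    (\<Sum>j\<in>C. card {T \<in> deg_trees (A - {i}) C d (e(j := e j - 1)). P (insert (i, j) T)})"
  using bij_betw_same_card[OF deg_trees_leaf_bij[of A C i d e P, OF assms]]
    assms(1,2) finite_deg_trees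
  by (simp add: card_SigmaI)

lemma single_edge_or_leaf:
  assumes "finite A" "finite C" "A \<noteq> {}" "C \<noteq> {}"
    and "\<forall>i\<in>A. 1 \<le> d i" "\<forall>j\<in>C. 1 \<le> e j"
    and "sum d A = card A + card C - 1" "sum e C = card A + card C - 1"
  obtains (singletons) i j where "A = {i}" "C = {j}" "d i = 1" "e j = 1"
    | (leaf_A) i where "i \<in> A" "d i = 1" "2 \<le> card A"
    | (leaf_C) j where "j \<in> C" "e j = 1" "2 \<le> card C"
proof (cases "card A = 1 \<and> card C = 1")
  case True
  then obtain i j where "A = {i}" "C = {j}" by (auto simp: card_1_singleton_iff)
  then show ?thesis using singletons assms(7,8) by simp
next
  case False
  have pos: "0 < card A" "0 < card C" using assms(1-4) by (simp_all add: card_gt_0_iff)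
  show ?thesis
  proof (rule ccontr)
    assume no_leaf: "\<not> ?thesis"
    have "card A < card C" if "2 \<le> card A"
    proof -
      have "\<forall>i\<in>A. 2 \<le> d i" using no_leaf leaf_A assms(5) that by force
      then have "2 * card A \<le> sum d A" using sum_mono[of A "\<lambda>_. 2" d] by simp
      then show ?thesis using assms(7) pos by linarith
    qed
    moreover have "card C < card A" if "2 \<le> card C"
    proof -
      have "\<forall>j\<in>C. 2 \<le> e j" using no_leaf leaf_C assms(6) that by force
      then have "2 * card C \<le> sum e C" using sum_mono[of C "\<lambda>_. 2" e] by simp
      then show ?thesis using assms(8) pos by linarith
    qed
    ultimately show False using False pos by linarith
  qed
qed

lemma bip_degree_induct [consumes 6, case_names degree_zero single_edge leaf swap]:
  assumes "finite A" "finite C" "A \<noteq> {}" "C \<noteq> {}"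
    and "sum d A = card A + card C - 1" "sum e C = card A + card C - 1"
    and degree_zero: "\<And>A C d e i. finite A \<Longrightarrow> finite C \<Longrightarrow> C \<noteq> {} \<Longrightarrow> i \<in> A \<Longrightarrow> d i = 0 \<Longrightarrow>
      P A C d e"
    and single_edge: "\<And>i j d e. d i = 1 \<Longrightarrow> e j = 1 \<Longrightarrow> P {i} {j} d e"
    and leaf: "\<And>A C d e i. finite A \<Longrightarrow> finite C \<Longrightarrow> i \<in> A \<Longrightarrow> d i = 1 \<Longrightarrow> 2 \<le> card A \<Longrightarrow>
      \<forall>j\<in>C. 1 \<le> e j \<Longrightarrow> sum d A = card A + card C - 1 \<Longrightarrow> sum e C = card A + card C - 1 \<Longrightarrow>
      (\<And>e'. sum e' C = card (A - {i}) + card C - 1 \<Longrightarrow> P (A - {i}) C d e') \<Longrightarrow> P A C d e"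
    and swap: "\<And>A C d e. P C A e d \<Longrightarrow> P A C d e"
  shows "P A C d e"
  using assms(1-6)
proof (induction "card A + card C" arbitrary: A C d e rule: less_induct)
  case less
  have by_leaf: "P A' C' d' e'"
    if "card A' + card C' = card A + card C" "finite A'" "finite C'" "i \<in> A'" "d' i = 1"
      "2 \<le> card A'" "\<forall>j\<in>C'. 1 \<le> e' j"
      "sum d' A' = card A' + card C' - 1" "sum e' C' = card A' + card C' - 1"
    for A' C' d' e' i
  proof (rule leaf[OF that(2-)])
    fix e'' assume "sum e'' C' = card (A' - {i}) + card C' - 1"
    moreover have "sum d' (A' - {i}) = card (A' - {i}) + card C' - 1"
      using that(2,4,5,6,8) by (simp add: sum_diff1_nat)
    moreover have "A' - {i} \<noteq> {}" using that(6) card_mono[of "{i}" A'] by auto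
    moreover have "C' \<noteq> {}" using that(6,9) by auto
    ultimately show "P (A' - {i}) C' d' e''"
      using that(1-4,6) by (intro less.hyps) (auto simp: card_Diff_singleton)
  qed
  consider (zero_A) i where "i \<in> A" "d i = 0" | (zero_C) j where "j \<in> C" "e j = 0"
    | (positive) "\<forall>i\<in>A. 1 \<le> d i" "\<forall>j\<in>C. 1 \<le> e j"
    by (meson less_one not_le)
  then show ?case
  proof cases
    case zero_A
    then show ?thesis using degree_zero less.prems by blast
  next
    case zero_C
    then show ?thesis using degree_zero[of C A j e d] swap less.prems by blast
  next
    case positive
    from less.prems(1-4) positive less.prems(5,6) show ?thesis
    proof (cases rule: single_edge_or_leaf)
      case (singletons i j)
      then show ?thesis using single_edge by simp
    next
      case (leaf_A i)
      then show ?thesis using by_leaf[of A C] positive less.prems by simp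
    next
      case (leaf_C j)
      then show ?thesis using by_leaf[of C A] swap positive less.prems by (simp add: add.commute)
    qed
  qed
qed

section \<open>Multinomial coefficients and the correction factor\<close>

definition multinom_on :: "nat \<Rightarrow> ('a \<Rightarrow> int) \<Rightarrow> 'a set \<Rightarrow> real" where
  "multinom_on n x S = (if (\<forall>j\<in>S. 0 \<le> x j) \<and> sum x S = int n
     then fact n / (\<Prod>j\<in>S. fact (nat (x j))) else 0)"

lemma multinom_eq_multinom_on: "multinom n (map x [0..<w+1]) = multinom_on n x {..w}"
proof -
  have set: "set [0..<w+1] = {..w}" by auto
  have "sum_list (map x [0..<w+1]) = sum x {..w}"
    by (simp only: sum_list_distinct_conv_sum_set[OF distinct_upt] set)
  moreover have "(\<Prod>k\<leftarrow>map x [0..<w+1]. fact (nat k)) = (\<Prod>j\<in>{..w}. fact (nat (x j)) :: real)"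
    by (simp only: map_map comp_def prod.distinct_set_conv_list[OF distinct_upt, symmetric] set)
  moreover have "(\<forall>k\<in>set (map x [0..<w+1]). 0 \<le> k) \<longleftrightarrow> (\<forall>j\<in>{..w}. 0 \<le> x j)"
    by (simp only: set_map set ball_simps)
  ultimately show ?thesis unfolding multinom_def multinom_on_def by simp
qed

lemma multinom_on_neg: "j \<in> S \<Longrightarrow> x j < 0 \<Longrightarrow> multinom_on n x S = 0"
  unfolding multinom_on_def by force

lemma multinom_on_remove_zero:
  assumes "finite S" "j \<in> S" "x j = 0"
  shows "multinom_on n x (S - {j}) = multinom_on n x S"
proof -
  have "sum x S = sum x (S - {j})" using sum.remove[OF assms(1,2), of x] assms(3) by simp
  moreover have "(\<Prod>l\<in>S. fact (nat (x l)) :: real) = (\<Prod>l\<in>S - {j}. fact (nat (x l)))"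
    using prod.remove[OF assms(1,2), of "\<lambda>l. fact (nat (x l))"] assms(3) by simp
  moreover have "(\<forall>l\<in>S. 0 \<le> x l) \<longleftrightarrow> (\<forall>l\<in>S - {j}. 0 \<le> x l)" using assms(2,3) by auto
  ultimately show ?thesis unfolding multinom_on_def by simp
qed

lemma multinom_on_decr:
  assumes "finite S" "j \<in> S" "1 \<le> n"
  shows "multinom_on (n - 1) (x(j := x j - 1)) S = multinom_on n x S * of_int (x j) / real n"
proof (cases "1 \<le> x j")
  case False
  then have "x j - 1 < 0" by simp
  then have "multinom_on (n - 1) (x(j := x j - 1)) S = 0"
    using multinom_on_neg[of j S] assms(2) by simp
  moreover have "multinom_on n x S * of_int (x j) = 0"
    using False multinom_on_neg[OF assms(2)] by (cases "x j = 0") simp_all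
  ultimately show ?thesis by simp
next
  case True
  let ?x' = "x(j := x j - 1)"
  have "sum ?x' S = sum x S - 1"
    using sum.remove[OF assms(1,2), of ?x'] sum.remove[OF assms(1,2), of x] by simp
  moreover have "(\<forall>l\<in>S. 0 \<le> ?x' l) \<longleftrightarrow> (\<forall>l\<in>S. 0 \<le> x l)" using True assms(2) by auto
  ultimately have cond: "((\<forall>l\<in>S. 0 \<le> ?x' l) \<and> sum ?x' S = int (n - 1)) \<longleftrightarrow>
      ((\<forall>l\<in>S. 0 \<le> x l) \<and> sum x S = int n)" using assms(3) by auto
  obtain k where k: "x j = int k + 1" using True by (metis add.commute zle_iff_zadd)
  define P where "P = (\<Prod>l\<in>S - {j}. fact (nat (x l)) :: real)"
  have "(\<Prod>l\<in>S. fact (nat (x l)) :: real) = of_int (x j) * fact k * P"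
    using prod.remove[OF assms(1,2), of "\<lambda>l. fact (nat (x l)) :: real"] k
    by (simp add: P_def nat_add_distrib)
  moreover have "(\<Prod>l\<in>S. fact (nat (?x' l)) :: real) = fact k * P"
    using prod.remove[OF assms(1,2), of "\<lambda>l. fact (nat (?x' l)) :: real"] k by (simp add: P_def)
  moreover have "(fact n :: real) = real n * fact (n - 1)" using assms(3) by (simp add: fact_reduce)
  moreover have "P \<noteq> 0" "real n \<noteq> 0" "(of_int (x j) :: real) \<noteq> 0"
    using assms(1,3) True by (simp_all add: P_def)
  ultimately show ?thesis unfolding multinom_on_def cond by (simp add: field_simps)
qed

definition num_deg_trees :: "nat set \<Rightarrow> nat set \<Rightarrow> (nat \<Rightarrow> nat) \<Rightarrow> (nat \<Rightarrow> nat) \<Rightarrow> real" where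
  "num_deg_trees A C d e =
     multinom_on (card A - 1) (\<lambda>j. int (e j) - 1) C *
     multinom_on (card C - 1) (\<lambda>i. int (d i) - 1) A"

lemma num_deg_trees_swap: "num_deg_trees C A e d = num_deg_trees A C d e"
  by (simp add: num_deg_trees_def mult.commute)

lemma num_deg_trees_degree_zero: "i \<in> A \<Longrightarrow> d i = 0 \<Longrightarrow> num_deg_trees A C d e = 0"
  unfolding num_deg_trees_def by (simp add: multinom_on_neg[of i A])

lemma num_deg_trees_remove_leaf:
  assumes "finite A" "finite C" "i \<in> A" "d i = 1" "2 \<le> card A" "j \<in> C" "1 \<le> e j"
  shows "num_deg_trees (A - {i}) C d (e(j := e j - 1)) =
    num_deg_trees A C d e * (real (e j) - 1) / real (card A - 1)"
proof -
  let ?x = "\<lambda>j. int (e j) - 1" and ?y = "\<lambda>i. int (d i) - 1"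
  have "(\<lambda>j'. int ((e(j := e j - 1)) j') - 1) = ?x(j := ?x j - 1)" using assms(7) by auto
  moreover have "card (A - {i}) - 1 = card A - 1 - 1" using assms(1,3) by simp
  moreover have "multinom_on (card A - 1 - 1) (?x(j := ?x j - 1)) C =
      multinom_on (card A - 1) ?x C * of_int (?x j) / real (card A - 1)"
    using assms(2,5,6) by (intro multinom_on_decr) auto
  moreover have "multinom_on (card C - 1) ?y (A - {i}) = multinom_on (card C - 1) ?y A"
    using assms(1,3,4) by (intro multinom_on_remove_zero) auto
  ultimately show ?thesis unfolding num_deg_trees_def using assms(7) by (simp add: of_nat_diff)
qed

lemma sum_degrees_minus_one:
  assumes "finite C" "sum e C = card A + card C - 1" "1 \<le> card A"
  shows "(\<Sum>j\<in>C. real (e j) - 1) = real (card A - 1)"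
proof -
  have "real (sum e C) = real (card A) + real (card C) - 1"
    using assms(2,3) by (simp add: of_nat_diff)
  then show ?thesis using assms(3) by (simp add: sum_subtractf of_nat_diff)
qed

definition edge_factor :: "nat \<Rightarrow> nat \<Rightarrow> real \<Rightarrow> real \<Rightarrow> real" where
  "edge_factor b w x y =
     (if 0 < w \<and> 0 < b then 1 - (real b - x + 1) * (real w - y + 1) / (real b * real w) else 1)"

lemma edge_factor_swap: "edge_factor w b y x = edge_factor b w x y"
  by (simp add: edge_factor_def mult.commute conj_commute)

lemma edge_factor_leaf:
  assumes "1 \<le> b" "w = 0 \<Longrightarrow> x = real b + 1"
  shows "edge_factor b w x 1 = (x - 1) / real b"
  using assms by (cases "w = 0") (simp_all add: edge_factor_def field_simps)

lemma edge_factor_at_leaf: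
  assumes "finite C" "m \<in> C" "2 \<le> card A" "sum e C = card A + card C - 1"
  shows "edge_factor (card A - 1) (card C - 1) (e m) 1 = (real (e m) - 1) / real (card A - 1)"
proof (rule edge_factor_leaf)
  assume "card C - 1 = 0"
  moreover have "0 < card C" using assms(1,2) by (auto simp: card_gt_0_iff)
  ultimately have "card C = 1" by simp
  then obtain x where "C = {x}" by (rule card_1_singletonE)
  then show "real (e m) = real (card A - 1) + 1" using assms(2-4) by (simp add: of_nat_diff)
qed (use assms(3) in auto)

lemma edge_factor_step:
  fixes X :: "'a \<Rightarrow> real"
  assumes "finite C" "m \<in> C" "(\<Sum>j\<in>C. X j) = real b" "X m = x - 1" "1 \<le> b"
    and "b = 1 \<Longrightarrow> y = real w + 1"
  shows "(\<Sum>j\<in>C. X j / real b * edge_factor (b - 1) w (x - (if j = m then 1 else 0)) y) =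
    edge_factor b w x y"
proof (cases "w = 0 \<or> b = 1")
  case True
  then have "edge_factor b w x y = 1" "edge_factor (b - 1) w z y = 1" for z
    using assms(6) by (auto simp: edge_factor_def)
  moreover have "(\<Sum>j\<in>C. X j / real b) = 1"
    using assms(3,5) by (simp add: sum_divide_distrib[symmetric])
  ultimately show ?thesis by simp
next
  case False
  then have b: "2 \<le> real b" and w: "0 < real w" using assms(5) by auto
  define K where "K = real w - y + 1"
  define c where "c = K / (real b * (real b - 1) * real w)"
  have "X j / real b * edge_factor (b - 1) w (x - (if j = m then 1 else 0)) y =
      X j / real b - (X j * (real b - x) + (if j = m then X j else 0)) * c" for j
    using False b w unfolding edge_factor_def c_def K_def
    by (cases "j = m") (simp_all add: of_nat_diff field_simps)
  then have "(\<Sum>j\<in>C. X j / real b * edge_factor (b - 1) w (x - (if j = m then 1 else 0)) y) =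
      (\<Sum>j\<in>C. X j) / real b - ((\<Sum>j\<in>C. X j * (real b - x)) + (\<Sum>j\<in>C. if j = m then X j else 0)) * c"
    by (simp add: sum_subtractf sum_divide_distrib sum_distrib_right[symmetric] sum.distrib)
  also have "\<dots> = (\<Sum>j\<in>C. X j) / real b - ((\<Sum>j\<in>C. X j) * (real b - x) + X m) * c"
    using assms(1,2) by (simp add: sum_distrib_right)
  also have "\<dots> = 1 - (real b * (real b - x) + (x - 1)) * c"
    using b assms(3,4) by simp
  also have "\<dots> = edge_factor b w x y"
    using False b w unfolding edge_factor_def c_def K_def by (simp add: field_simps)
  finally show ?thesis .
qed

theorem card_deg_trees:
  assumes "finite A" "finite C" "A \<noteq> {}" "C \<noteq> {}"
    and "sum d A = card A + card C - 1" "sum e C = card A + card C - 1"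
  shows "real (card (deg_trees A C d e)) = num_deg_trees A C d e"
  using assms
proof (induction rule: bip_degree_induct)
  case (degree_zero A C d e i)
  then show ?case by (simp add: deg_trees_degree_zero num_deg_trees_degree_zero)
next
  case (single_edge i j d e)
  then show ?case by (simp add: deg_trees_single_edge num_deg_trees_def multinom_on_def)
next
  case (leaf A C d e i)
  let ?e = "\<lambda>j. e(j := e j - 1)"
  have "real (card (deg_trees A C d e)) = (\<Sum>j\<in>C. real (card (deg_trees (A - {i}) C d (?e j))))"
    using card_deg_trees_leaf[of A C i d e "\<lambda>_. True"] leaf.hyps by simp
  also have "\<dots> = (\<Sum>j\<in>C. num_deg_trees A C d e * (real (e j) - 1) / real (card A - 1))"
  proof (rule sum.cong[OF refl])
    fix j assume j: "j \<in> C"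
    then have "sum (?e j) C = card (A - {i}) + card C - 1"
      using leaf.hyps by (simp add: sum_diff1_nat[symmetric] sum.remove)
    then have "real (card (deg_trees (A - {i}) C d (?e j))) = num_deg_trees (A - {i}) C d (?e j)"
      by (rule leaf.IH)
    also have "\<dots> = num_deg_trees A C d e * (real (e j) - 1) / real (card A - 1)"
      using leaf.hyps j by (intro num_deg_trees_remove_leaf) auto
    finally show "real (card (deg_trees (A - {i}) C d (?e j))) =
        num_deg_trees A C d e * (real (e j) - 1) / real (card A - 1)" .
  qed
  also have "\<dots> = num_deg_trees A C d e"
    using sum_degrees_minus_one[of C e A] leaf.hyps
    by (simp add: sum_distrib_left[symmetric] sum_divide_distrib[symmetric])
  finally show ?case .
next
  case (swap A C d e)
  then show ?case using card_deg_trees_swap[of C A e d "\<lambda>_. True"] num_deg_trees_swap by simp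
qed

lemma card_deg_trees_with_leaf_edge:
  assumes "finite A" "finite C" "i \<in> A" "m \<in> C" "d i = 1" "2 \<le> card A" "\<forall>j\<in>C. 1 \<le> e j"
    and "sum d A = card A + card C - 1" "sum e C = card A + card C - 1"
  shows "real (card {T \<in> deg_trees A C d e. (i, m) \<in> T}) =
    num_deg_trees A C d e * (real (e m) - 1) / real (card A - 1)"
proof -
  let ?e = "\<lambda>j. e(j := e j - 1)"
  have "card {T \<in> deg_trees A C d e. (i, m) \<in> T} =
      (\<Sum>j\<in>C. card {T \<in> deg_trees (A - {i}) C d (?e j). (i, m) \<in> insert (i, j) T})"
    using assms(1-3,5,7) by (rule card_deg_trees_leaf)
  also have "\<dots> = (\<Sum>j\<in>C. if j = m then card (deg_trees (A - {i}) C d (?e m)) else 0)"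
  proof (rule sum.cong[OF refl])
    fix j
    have "(i, m) \<notin> T" if "T \<in> deg_trees (A - {i}) C d (?e j)" for T
      using deg_trees_subset[OF that] by blast
    then have "{T \<in> deg_trees (A - {i}) C d (?e j). (i, m) \<in> insert (i, j) T} =
        (if j = m then deg_trees (A - {i}) C d (?e m) else {})"
      by auto
    then show "card {T \<in> deg_trees (A - {i}) C d (?e j). (i, m) \<in> insert (i, j) T} =
        (if j = m then card (deg_trees (A - {i}) C d (?e m)) else 0)"
      by simp
  qed
  also have "\<dots> = card (deg_trees (A - {i}) C d (?e m))" using assms(2,4) by simp
  finally have "real (card {T \<in> deg_trees A C d e. (i, m) \<in> T}) =
      real (card (deg_trees (A - {i}) C d (?e m)))" by simp
  also have "\<dots> = num_deg_trees (A - {i}) C d (?e m)"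
  proof (rule card_deg_trees)
    show "A - {i} \<noteq> {}" using assms(6) card_mono[of "{i}" A] by auto
    show "C \<noteq> {}" using assms(4) by auto
    show "sum d (A - {i}) = card (A - {i}) + card C - 1"
      using assms(1,3,5,6,8) by (simp add: sum_diff1_nat)
    show "sum (?e m) C = card (A - {i}) + card C - 1"
      using assms(1-4,6,7,9) by (simp add: sum_diff1_nat[symmetric] sum.remove)
  qed (use assms(1,2) in auto)
  also have "\<dots> = num_deg_trees A C d e * (real (e m) - 1) / real (card A - 1)"
    using assms by (intro num_deg_trees_remove_leaf) auto
  finally show ?thesis .
qed

lemma degree_beside_leaf:
  assumes "finite A" "card A = 2" "i \<in> A" "k \<in> A" "k \<noteq> i" "d i = 1"
    and "sum d A = card A + card C - 1"
  shows "d k = card C"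
proof -
  have "card (A - {i}) = 1" using assms(2,3) by simp
  then obtain x where "A - {i} = {x}" by (rule card_1_singletonE)
  moreover have "k \<in> A - {i}" using assms(4,5) by simp
  ultimately have "A - {i} = {k}" by simp
  then have "sum d A = d i + d k" using sum.remove[OF assms(1,3), of d] by simp
  then show ?thesis using assms(2,6,7) by linarith
qed

lemma card_deg_trees_with_edge_off_leaf:
  assumes "finite A" "finite C" "i \<in> A" "d i = 1" "2 \<le> card A" "\<forall>j\<in>C. 1 \<le> e j"
    and "k \<in> A" "k \<noteq> i" "m \<in> C"
    and "sum d A = card A + card C - 1" "sum e C = card A + card C - 1"
    and IH: "\<And>e'. sum e' C = card (A - {i}) + card C - 1 \<Longrightarrow>
      real (card {T \<in> deg_trees (A - {i}) C d e'. (k, m) \<in> T}) =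
      num_deg_trees (A - {i}) C d e' * edge_factor (card (A - {i}) - 1) (card C - 1) (e' m) (d k)"
  shows "real (card {T \<in> deg_trees A C d e. (k, m) \<in> T}) =
    num_deg_trees A C d e * edge_factor (card A - 1) (card C - 1) (e m) (d k)"
proof -
  let ?e = "\<lambda>j. e(j := e j - 1)"
  let ?f = "\<lambda>j. (real (e j) - 1) / real (card A - 1) *
    edge_factor (card A - 1 - 1) (card C - 1) (real (e m) - (if j = m then 1 else 0)) (d k)"
  have "real (card {T \<in> deg_trees A C d e. (k, m) \<in> T}) =
      (\<Sum>j\<in>C. real (card {T \<in> deg_trees (A - {i}) C d (?e j). (k, m) \<in> T}))"
    using card_deg_trees_leaf[of A C i d e "\<lambda>T. (k, m) \<in> T"] assms(1-6,8) by simp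
  also have "\<dots> = (\<Sum>j\<in>C. num_deg_trees A C d e * ?f j)"
  proof (rule sum.cong[OF refl])
    fix j assume j: "j \<in> C"
    then have "sum (?e j) C = card (A - {i}) + card C - 1"
      using assms(1,2,3,5,6,11) by (simp add: sum_diff1_nat[symmetric] sum.remove)
    then have "real (card {T \<in> deg_trees (A - {i}) C d (?e j). (k, m) \<in> T}) =
        num_deg_trees (A - {i}) C d (?e j) *
        edge_factor (card (A - {i}) - 1) (card C - 1) (?e j m) (d k)"
      by (rule IH)
    moreover have "edge_factor (card (A - {i}) - 1) (card C - 1) (?e j m) (d k) =
        edge_factor (card A - 1 - 1) (card C - 1) (real (e m) - (if j = m then 1 else 0)) (d k)"
      using assms(1,3,6,9) by (simp add: of_nat_diff)
    moreover have "num_deg_trees (A - {i}) C d (?e j) =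
        num_deg_trees A C d e * (real (e j) - 1) / real (card A - 1)"
      using assms j by (intro num_deg_trees_remove_leaf) auto
    ultimately show "real (card {T \<in> deg_trees (A - {i}) C d (?e j). (k, m) \<in> T}) =
        num_deg_trees A C d e * ?f j"
      by simp
  qed
  also have "\<dots> = num_deg_trees A C d e * edge_factor (card A - 1) (card C - 1) (e m) (d k)"
  proof -
    have "0 < card C" using assms(2,9) by (auto simp: card_gt_0_iff)
    then have "real (d k) = real (card C - 1) + 1" if "card A - 1 = 1"
      using degree_beside_leaf[of A i k d C] that assms(1,3,4,7,8,10) by (simp add: of_nat_diff)
    moreover have "(\<Sum>j\<in>C. real (e j) - 1) = real (card A - 1)"
      using assms(2,5,11) by (intro sum_degrees_minus_one) auto
    ultimately have "(\<Sum>j\<in>C. ?f j) = edge_factor (card A - 1) (card C - 1) (e m) (d k)"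
      using assms(2,5,9) by (intro edge_factor_step) auto
    then show ?thesis by (simp only: sum_distrib_left[symmetric])
  qed
  finally show ?thesis .
qed

theorem card_deg_trees_with_edge:
  assumes "finite A" "finite C" "k \<in> A" "m \<in> C"
    and "sum d A = card A + card C - 1" "sum e C = card A + card C - 1"
  shows "real (card {T \<in> deg_trees A C d e. (k, m) \<in> T}) =
    num_deg_trees A C d e * edge_factor (card A - 1) (card C - 1) (e m) (d k)"
proof -
  have "A \<noteq> {}" "C \<noteq> {}" using assms(3,4) by auto
  with assms(1,2) have "\<forall>k\<in>A. \<forall>m\<in>C. real (card {T \<in> deg_trees A C d e. (k, m) \<in> T}) =
      num_deg_trees A C d e * edge_factor (card A - 1) (card C - 1) (e m) (d k)"
    using assms(5,6)
  proof (induction rule: bip_degree_induct)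
    case (degree_zero A C d e i)
    then show ?case by (simp add: deg_trees_degree_zero num_deg_trees_degree_zero)
  next
    case (single_edge i j d e)
    then have "{T \<in> deg_trees {i} {j} d e. (i, j) \<in> T} = {{(i, j)}}"
      by (auto simp: deg_trees_single_edge)
    with single_edge show ?case by (simp add: num_deg_trees_def multinom_on_def edge_factor_def)
  next
    case (leaf A C d e i)
    show ?case
    proof (intro ballI)
      fix k m assume k: "k \<in> A" and m: "m \<in> C"
      show "real (card {T \<in> deg_trees A C d e. (k, m) \<in> T}) =
          num_deg_trees A C d e * edge_factor (card A - 1) (card C - 1) (e m) (d k)"
      proof (cases "k = i")
        case True
        then show ?thesis
          using card_deg_trees_with_leaf_edge[of A C i m d e] edge_factor_at_leaf[of C m A e]
            leaf.hyps m by simp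
      next
        case False
        show ?thesis
        proof (rule card_deg_trees_with_edge_off_leaf[of A C i d e k m])
          fix e' assume "sum e' C = card (A - {i}) + card C - 1"
          then show "real (card {T \<in> deg_trees (A - {i}) C d e'. (k, m) \<in> T}) =
              num_deg_trees (A - {i}) C d e' *
              edge_factor (card (A - {i}) - 1) (card C - 1) (e' m) (d k)"
            using leaf.IH k m False by blast
        qed (use leaf.hyps k m False in auto)
      qed
    qed
  next
    case (swap A C d e)
    show ?case
    proof (intro ballI)
      fix k m assume "k \<in> A" "m \<in> C"
      then show "real (card {T \<in> deg_trees A C d e. (k, m) \<in> T}) =
          num_deg_trees A C d e * edge_factor (card A - 1) (card C - 1) (e m) (d k)"
        using swap.IH[rule_format, of m k] card_deg_trees_swap[of A C d e "\<lambda>T. (k, m) \<in> T"]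
          num_deg_trees_swap edge_factor_swap
        by simp
    qed
  qed
  then show ?thesis using assms(3,4) by blast
qed

theorem lemmaB2:
  fixes b w k m :: nat and d e :: "nat \<Rightarrow> nat"
  assumes "(\<Sum>i\<le>b. d i) = b + w + 1"
    and "(\<Sum>j\<le>w. e j) = b + w + 1"
    and "k \<le> b" and "m \<le> w"
  shows "real (card {T. bip_spanning_tree b w T \<and> (k, m) \<in> T \<and>
                       (\<forall>i\<le>b. deg_a T i = d i) \<and> (\<forall>j\<le>w. deg_c T j = e j)})
         = multinom b (map (\<lambda>j. int (e j) - 1) [0..<w+1])
           * multinom w (map (\<lambda>i. int (d i) - 1) [0..<b+1])
           * (if 0 < w \<and> 0 < b
              then 1 - ((real b - real (e m) + 1) * (real w - real (d k) + 1)) / (real b * real w)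
              else 1)"
proof -
  have "{T. bip_spanning_tree b w T \<and> (k, m) \<in> T \<and>
            (\<forall>i\<le>b. deg_a T i = d i) \<and> (\<forall>j\<le>w. deg_c T j = e j)} =
      {T \<in> deg_trees {..b} {..w} d e. (k, m) \<in> T}"
    unfolding deg_trees_def bip_spanning_tree_iff_bip_tree by auto
  moreover have "real (card {T \<in> deg_trees {..b} {..w} d e. (k, m) \<in> T}) =
      num_deg_trees {..b} {..w} d e * edge_factor b w (e m) (d k)"
    using card_deg_trees_with_edge[of "{..b}" "{..w}" k m d e] assms by simp
  ultimately show ?thesis
    unfolding num_deg_trees_def edge_factor_def multinom_eq_multinom_on by simp
qed

end
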